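(* Let $d,n\ge1$ and $\boldsymbol{x}_1,\dots,\boldsymbol{x}_n\in\mathbb{R}^d$, with $\boldsymbol{S}=\sum_{j=1}^n\boldsymbol{x}_j\boldsymbol{x}_j^\top$. There exist matrices $\boldsymbol{Q}_m,\boldsymbol{K}_m,\boldsymbol{V}_m\in\mathbb{R}^{2d\times2d}$, $m=1,2$, depending only on $d$ and $n$, and the matrix $\boldsymbol{W}=\begin{bmatrix}\boldsymbol{I}_d&\boldsymbol{O}_d\\ \boldsymbol{O}_d&\boldsymbol{O}_d\end{bmatrix}$, such that the following holds for every symmetric matrix $\boldsymbol{T}\in\mathbb{R}^{d\times d}$: if the 2-head full attention layer with normalized ReLU activation and parameters $\{\boldsymbol{Q}_m,\boldsymbol{K}_m,\boldsymbol{V}_m\}_{m=1}^2$ is applied to $\boldsymbol{H}=[\boldsymbol{h}_1,\dots,\boldsymbol{h}_n]$ with $\boldsymbol{h}_t=\begin{bmatrix}\boldsymbol{T}\boldsymbol{x}_t\\ \boldsymbol{x}_t\end{bmatrix}$, producing $\tilde{\boldsymbol{h}}_t$, then $$\tilde{\boldsymbol{h}}_t=\begin{bmatrix}\big(\boldsymbol{T}-\tfrac12\boldsymbol{T}\boldsymbol{S}\boldsymbol{T}\big)\boldsymbol{x}_t\\ \boldsymbol{x}_t\end{bmatrix}\quad\text{and}\quad \tilde{\boldsymbol{h}}_t+\boldsymbol{W}\tilde{\boldsymbol{h}}_t=\begin{bmatrix}\boldsymbol{T}'\boldsymbol{x}_t\\ \boldsymbol{x}_t\end{bmatrix}\ \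 (t\in[n]),$$ where $\boldsymbol{T}'=2\boldsymbol{T}-\boldsymbol{T}\boldsymbol{S}\boldsymbol{T}$, and $\boldsymbol{T}'$ is again symmetric. In particular, iterating this layer $k$ times starting from $\boldsymbol{T}^{(0)}=\alpha\boldsymbol{S}$ produces columns $\begin{bmatrix}\boldsymbol{M}_k\boldsymbol{x}_t\\ \boldsymbol{x}_t\end{bmatrix}$, where $\boldsymbol{M}_0=\alpha\boldsymbol{S}$ and $\boldsymbol{M}_{j}=2\boldsymbol{M}_{j-1}-\boldsymbol{M}_{j-1}\boldsymbol{S}\boldsymbol{M}_{j-1}$ for $j\ge1$.
   Context: A full attention layer with $M$ heads and normalized ReLU activation, with parameters $\{\boldsymbol{Q}_m,\boldsymbol{K}_m,\boldsymbol{V}_m\}_{m=1}^M$ (matrices of size $D\times D$), maps an input $\boldsymbol{H}=[\boldsymbol{h}_1,\dots,\boldsymbol{h}_n]\in\mathbb{R}^{D\times n}$ to $\tilde{\boldsymbol{H}}=[\tilde{\boldsymbol{h}}_1,\dots,\tilde{\boldsymbol{h}}_n]$ where $$\tilde{\boldsymbol{h}}_t=\boldsymbol{h}_t+\frac{1}{n}\sum_{m=1}^M\sum_{j=1}^n \mathrm{ReLU}\big(\langle \boldsymbol{Q}_m\boldsymbol{h}_t,\boldsymbol{K}_m\boldsymbol{h}_j\rangle\big)\,\boldsymbol{V}_m\boldsymbol{h}_j,\qquad t\in[n].$$ $\boldsymbol{I}_d$ and $\boldsymbol{O}_d$ denote the $d\times d$ identity and zero matrices. *)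

theory Defs
  imports "HOL-Analysis.Analysis"
begin

definition relu :: "real \<Rightarrow> real" where
  "relu a = max 0 a"

definition attn_layer ::
  "nat \<Rightarrow> (nat \<Rightarrow> real^'D::finite^'D) \<Rightarrow> (nat \<Rightarrow> real^'D^'D) \<Rightarrow> (nat \<Rightarrow> real^'D^'D)
   \<Rightarrow> nat \<Rightarrow> (nat \<Rightarrow> real^'D) \<Rightarrow> nat \<Rightarrow> real^'D" where
  "attn_layer M Q K V n H t =
     H t + (1 / real n) *\<^sub>R
       (\<Sum>m\<in>{1..M}. \<Sum>j\<in>{1..n}. relu ((Q m *v H t) \<bullet> (K m *v H j)) *\<^sub>R (V m *v H j))"

text \<open>Stacking two d-vectors into a 2d-vector; coordinates Inl i (top block), Inr i (bottom).\<close>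
definition stack :: "real^'d::finite \<Rightarrow> real^'d \<Rightarrow> real^('d + 'd)" where
  "stack a b = (\<chi> i. case i of Inl k \<Rightarrow> a $ k | Inr k \<Rightarrow> b $ k)"

text \<open>W = [[I_d, O_d],[O_d, O_d]].\<close>
definition Wmat :: "real^('d::finite + 'd)^('d + 'd)" where
  "Wmat = (\<chi> i j. if i = j \<and> isl i then 1 else 0)"

definition outer :: "real^'d::finite \<Rightarrow> real^'d \<Rightarrow> real^'d^'d" where
  "outer x y = (\<chi> i k. x $ i * y $ k)"

definition gram :: "nat \<Rightarrow> (nat \<Rightarrow> real^'d::finite) \<Rightarrow> real^'d^'d" where
  "gram n x = (\<Sum>j\<in>{1..n}. outer (x j) (x j))"

fun Mseq :: "real^'d::finite^'d \<Rightarrow> real \<Rightarrow> nat \<Rightarrow> real^'d^'d" where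
  "Mseq S \<alpha> 0 = \<alpha> *\<^sub>R S"
| "Mseq S \<alpha> (Suc k) = 2 *\<^sub>R Mseq S \<alpha> k - Mseq S \<alpha> k ** S ** Mseq S \<alpha> k"

end

theory Submission
  imports Defs
begin

text \<open>Two ReLU heads whose queries and values differ only in sign add up to one linear attention
  head, because \<open>relu a - relu (-a) = a\<close>. Take the query to extract \<open>T x\<^sub>t\<close>, the key to extract
  \<open>x\<^sub>j\<close> and the value to return \<open>-(n/2) T x\<^sub>j\<close> in the top block. The head then adds
  \<open>-(1/2) \<Sum>\<^sub>j (x\<^sub>j\<^sup>T T x\<^sub>t) T x\<^sub>j = -(1/2) T S T x\<^sub>t\<close> to the top block and leaves the bottom block
  \<open>x\<^sub>t\<close> untouched. Adding \<open>W h\<close> doubles the top block, which gives the Newton--Schulz step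
  \<open>T' = 2T - TST\<close>; since the output has the shape of the input, the layer can be iterated.\<close>

lemma relu_sub_relu_uminus: "relu a - relu (- a) = a"
  unfolding relu_def by auto

lemma uminus_matrix_vector_mult: "(- A) *v v = - (A *v (v :: real^'n::finite))"
  by (simp add: vec_eq_iff matrix_vector_mult_def sum_negf)

definition signed_heads :: "'a::uminus \<Rightarrow> nat \<Rightarrow> 'a" where
  "signed_heads A m = (if m = 1 then A else - A)"

lemma attn_layer_signed_heads:
  "attn_layer 2 (signed_heads Q) (\<lambda>_. K) (signed_heads V) n H t
     = H t + (1 / real n) *\<^sub>R (\<Sum>j\<in>{1..n}. ((Q *v H t) \<bullet> (K *v H j)) *\<^sub>R (V *v H j))"
proof -
  have relu_pair: "relu b *\<^sub>R w + relu (- b) *\<^sub>R (- w) = b *\<^sub>R w" for b and w :: "real^'n"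
    by (simp flip: scaleR_left_diff_distrib add: relu_sub_relu_uminus)
  have "(\<Sum>m\<in>{1..2}. \<Sum>j\<in>{1..n}.
          relu ((signed_heads Q m *v H t) \<bullet> (K *v H j)) *\<^sub>R (signed_heads V m *v H j))
      = (\<Sum>j\<in>{1..n}. relu ((Q *v H t) \<bullet> (K *v H j)) *\<^sub>R (V *v H j)
          + relu (- ((Q *v H t) \<bullet> (K *v H j))) *\<^sub>R (- (V *v H j)))"
    by (simp add: numeral_2_eq_2 signed_heads_def uminus_matrix_vector_mult sum.distrib sum_subtractf sum_negf)
  then show ?thesis
    unfolding attn_layer_def relu_pair by simp
qed

lemma sum_UNIV_Plus:
  fixes f :: "'a::finite + 'b::finite \<Rightarrow> 'c::comm_monoid_add"
  shows "(\<Sum>k\<in>UNIV. f k) = (\<Sum>a\<in>UNIV. f (Inl a)) + (\<Sum>b\<in>UNIV. f (Inr b))"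
  using sum.Plus[of "UNIV :: 'a set" "UNIV :: 'b set" f] by (simp add: comp_def)

lemma stack_add: "stack a b + stack c d = stack (a + c) (b + d)"
  unfolding stack_def by (auto simp: vec_eq_iff split: sum.splits)

lemma scaleR_stack: "r *\<^sub>R stack a b = stack (r *\<^sub>R a) (r *\<^sub>R b)"
  unfolding stack_def by (auto simp: vec_eq_iff split: sum.splits)

lemma sum_stack: "(\<Sum>j\<in>A. stack (f j) (g j)) = stack (\<Sum>j\<in>A. f j) (\<Sum>j\<in>A. g j)"
  unfolding stack_def by (auto simp: vec_eq_iff sum_component split: sum.splits)

lemma inner_stack: "stack a b \<bullet> stack c d = a \<bullet> c + b \<bullet> d"
  unfolding stack_def inner_vec_def by (simp add: sum_UNIV_Plus)

lemma Wmat_mult_stack: "Wmat *v stack a b = stack a 0"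
  unfolding Wmat_def stack_def matrix_vector_mult_def
  by (auto simp: vec_eq_iff sum_UNIV_Plus if_distrib[where f="\<lambda>c. c * _"] cong: if_cong
      split: sum.splits)

definition Kmat :: "real^('d::finite + 'd)^('d + 'd)" where
  "Kmat = (\<chi> i j. case (i, j) of (Inl a, Inr b) \<Rightarrow> if a = b then 1 else 0 | _ \<Rightarrow> 0)"

lemma Kmat_mult_stack: "Kmat *v stack a b = stack b 0"
  unfolding Kmat_def stack_def matrix_vector_mult_def
  by (auto simp: vec_eq_iff sum_UNIV_Plus if_distrib[where f="\<lambda>c. c * _"] cong: if_cong
      split: sum.splits)

lemma gram_mult_vec: "gram n x *v v = (\<Sum>j\<in>{1..n}. (x j \<bullet> v) *\<^sub>R x j)"
proof -
  have "(\<Sum>k\<in>UNIV. (\<Sum>j = 1..n. x j $ i * x j $ k) * v $ k)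
      = (\<Sum>j = 1..n. (\<Sum>k\<in>UNIV. x j $ k * v $ k) * x j $ i)" for i
    unfolding sum_distrib_right by (subst sum.swap) (simp add: sum_distrib_right mult_ac)
  then show ?thesis
    by (simp add: gram_def outer_def vec_eq_iff matrix_vector_mult_def inner_vec_def sum_component)
qed

lemma sandwich_gram_mult_vec:
  "(T ** gram n x ** T) *v v = (\<Sum>j\<in>{1..n}. (x j \<bullet> (T *v v)) *\<^sub>R (T *v x j))"
proof -
  have "(T ** gram n x ** T) *v v = T *v (gram n x *v (T *v v))"
    by (simp add: matrix_vector_mul_assoc matrix_mul_assoc)
  then show ?thesis
    by (simp add: gram_mult_vec linear_sum[OF matrix_vector_mul_linear] matrix_vector_mult_scaleR)
qed

lemma transpose_gram: "transpose (gram n x) = gram n x"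
  by (simp add: transpose_def gram_def outer_def vec_eq_iff sum_component mult.commute)

lemma transpose_diff: "transpose (A - B) = transpose A - transpose (B :: 'a::ab_group_add^'n^'m)"
  by (simp add: transpose_def vec_eq_iff)

lemma transpose_newton_step:
  assumes "transpose T = T"
  shows "transpose (2 *\<^sub>R T - T ** gram n x ** T) = 2 *\<^sub>R T - T ** gram n x ** T"
  using assms
  by (simp add: transpose_diff transpose_scalar matrix_transpose_mul transpose_gram matrix_mul_assoc)

definition newton_Q :: "nat \<Rightarrow> real^('d::finite + 'd)^('d + 'd)" where
  "newton_Q = signed_heads Wmat"

definition newton_K :: "nat \<Rightarrow> real^('d::finite + 'd)^('d + 'd)" where
  "newton_K = (\<lambda>_. Kmat)"

definition newton_V :: "nat \<Rightarrow> nat \<Rightarrow> real^('d::finite + 'd)^('d + 'd)" where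
  "newton_V n = signed_heads ((- real n / 2) *\<^sub>R Wmat)"

lemma attn_layer_newton:
  assumes "n \<ge> 1"
  shows "attn_layer 2 newton_Q newton_K (newton_V n) n (\<lambda>j. stack (T *v x j) (x j)) t
     = stack ((T - (1/2) *\<^sub>R (T ** gram n x ** T)) *v x t) (x t)"
proof -
  define H where "H j = stack (T *v x j) (x j)" for j
  have value_stack: "((- real n / 2) *\<^sub>R Wmat) *v H j = stack ((- real n / 2) *\<^sub>R (T *v x j)) 0" for j
    unfolding H_def scaleR_matrix_vector_assoc[symmetric] Wmat_mult_stack scaleR_stack by simp
  have score: "(Wmat *v H t) \<bullet> (Kmat *v H j) = x j \<bullet> (T *v x t)" for j
    by (simp add: H_def Wmat_mult_stack Kmat_mult_stack inner_stack inner_commute)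
  have "(1 / real n) *\<^sub>R (\<Sum>j\<in>{1..n}.
          ((Wmat *v H t) \<bullet> (Kmat *v H j)) *\<^sub>R ((- real n / 2) *\<^sub>R Wmat *v H j))
      = stack ((- 1/2) *\<^sub>R ((T ** gram n x ** T) *v x t)) 0"
    unfolding score value_stack scaleR_stack sum_stack sandwich_gram_mult_vec
    using assms by (simp add: scaleR_sum_right)
  then show ?thesis
    unfolding newton_Q_def newton_K_def newton_V_def attn_layer_signed_heads H_def[symmetric]
    by (simp add: H_def stack_add matrix_vector_mult_diff_rdistrib scaleR_matrix_vector_assoc[symmetric])
qed

lemma attn_layer_newton_plus_W:
  assumes "n \<ge> 1"
  shows "attn_layer 2 newton_Q newton_K (newton_V n) n (\<lambda>j. stack (T *v x j) (x j)) t
      + Wmat *v attn_layer 2 newton_Q newton_K (newton_V n) n (\<lambda>j. stack (T *v x j) (x j)) t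
     = stack ((2 *\<^sub>R T - T ** gram n x ** T) *v x t) (x t)"
proof -
  have doubled: "(T - (1/2) *\<^sub>R (T ** gram n x ** T)) + (T - (1/2) *\<^sub>R (T ** gram n x ** T))
      = 2 *\<^sub>R T - T ** gram n x ** T"
    by (simp add: vec_eq_iff)
  show ?thesis
    unfolding attn_layer_newton[OF assms] Wmat_mult_stack stack_add add.right_neutral
      matrix_vector_mult_add_rdistrib[symmetric] doubled ..
qed

lemma funpow_attn_layer_newton_plus_W:
  assumes "n \<ge> 1"
  shows "((\<lambda>H j. attn_layer 2 newton_Q newton_K (newton_V n) n H j
                   + Wmat *v attn_layer 2 newton_Q newton_K (newton_V n) n H j) ^^ k)
            (\<lambda>j. stack ((\<alpha> *\<^sub>R gram n x) *v x j) (x j))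
         = (\<lambda>j. stack (Mseq (gram n x) \<alpha> k *v x j) (x j))"
  by (induction k) (simp_all add: attn_layer_newton_plus_W[OF assms])

theorem mainTheorem3:
  fixes n :: nat
  assumes "n \<ge> 1"
  shows "\<exists>Q K V :: nat \<Rightarrow> real^('d::finite + 'd)^('d + 'd).
    \<forall>x :: nat \<Rightarrow> real^'d.
      (\<forall>T :: real^'d^'d. transpose T = T \<longrightarrow>
         (\<forall>t\<in>{1..n}.
            attn_layer 2 Q K V n (\<lambda>j. stack (T *v x j) (x j)) t
              = stack ((T - (1/2) *\<^sub>R (T ** gram n x ** T)) *v x t) (x t)
          \<and> attn_layer 2 Q K V n (\<lambda>j. stack (T *v x j) (x j)) t
              + Wmat *v attn_layer 2 Q K V n (\<lambda>j. stack (T *v x j) (x j)) t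
              = stack ((2 *\<^sub>R T - T ** gram n x ** T) *v x t) (x t))
         \<and> transpose (2 *\<^sub>R T - T ** gram n x ** T) = 2 *\<^sub>R T - T ** gram n x ** T)
    \<and> (\<forall>(\<alpha>::real) (k::nat). \<forall>t\<in>{1..n}.
         ((\<lambda>H j. attn_layer 2 Q K V n H j + Wmat *v attn_layer 2 Q K V n H j) ^^ k)
            (\<lambda>j. stack ((\<alpha> *\<^sub>R gram n x) *v x j) (x j)) t
         = stack (Mseq (gram n x) \<alpha> k *v x t) (x t))"
  using attn_layer_newton[OF assms] attn_layer_newton_plus_W[OF assms] transpose_newton_step
    funpow_attn_layer_newton_plus_W[OF assms, THEN fun_cong]
  by blast

end
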